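(* If $(\mathbb N,U)$ is a universal tournament, then there exists a sequence $X_1,X_2,\dots$ of independent continuous random variables on $[0,1]$ with $E(X_i)=\tfrac12$ for all $i$, such that $P(X_i>X_j)>\tfrac12$ if and only if $i\to j$ in $U$.
   Context: A continuous random variable on $[0,1]$ is one whose distribution function is continuous and strictly increasing on $[0,1]$ with value $0$ at $0$ and $1$ at $1$. A tournament $(T,U)$ ($U\subset T\times T$ with no diagonal pairs and exactly one of $(i,j),(j,i)$ for each distinct $i,j$; $i\to j$ means $(i,j)\in U$) is universal if for every tournament $R$ on a countable set $S$, every finite $S_0\subset S$ and every embedding $\phi:R\cap(S_0\times S_0)\to U$ (an injective map with $i\to j$ iff $\phi(i)\to\phi(j)$), there is an embedding $\psi:R\to U$ extending $\phi$. *)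

theory Defs
  imports "HOL-Probability.Probability"
begin

definition tournament :: "'a set \<Rightarrow> ('a \<times> 'a) set \<Rightarrow> bool" where
  "tournament T U \<longleftrightarrow> U \<subseteq> T \<times> T \<and> (\<forall>i\<in>T. (i, i) \<notin> U) \<and>
     (\<forall>i\<in>T. \<forall>j\<in>T. i \<noteq> j \<longrightarrow> ((i, j) \<in> U \<longleftrightarrow> (j, i) \<notin> U))"

definition tourn_embedding ::
  "'a set \<Rightarrow> ('a \<times> 'a) set \<Rightarrow> ('a \<Rightarrow> 'b) \<Rightarrow> 'b set \<Rightarrow> ('b \<times> 'b) set \<Rightarrow> bool" where
  "tourn_embedding A R f T U \<longleftrightarrow> f ` A \<subseteq> T \<and> inj_on f A \<and>
     (\<forall>i\<in>A. \<forall>j\<in>A. (i, j) \<in> R \<longleftrightarrow> (f i, f j) \<in> U)"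

text \<open>Universality; countable vertex sets are represented as subsets of nat
  (every countable set is in bijection with such a set).\<close>
definition universal_tournament :: "'b set \<Rightarrow> ('b \<times> 'b) set \<Rightarrow> bool" where
  "universal_tournament T U \<longleftrightarrow> tournament T U \<and>
     (\<forall>(S :: nat set) R S0 \<phi>. tournament S R \<and> finite S0 \<and> S0 \<subseteq> S \<and>
        tourn_embedding S0 R \<phi> T U \<longrightarrow>
        (\<exists>\<psi>. tourn_embedding S R \<psi> T U \<and> (\<forall>i\<in>S0. \<psi> i = \<phi> i)))"

definition distr_fun :: "'a measure \<Rightarrow> ('a \<Rightarrow> real) \<Rightarrow> real \<Rightarrow> real" where
  "distr_fun M X x = measure M {\<omega> \<in> space M. X \<omega> \<le> x}"

definition continuous_rv_01 :: "'a measure \<Rightarrow> ('a \<Rightarrow> real) \<Rightarrow> bool" where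
  "continuous_rv_01 M X \<longleftrightarrow> X \<in> borel_measurable M \<and>
     continuous_on {0..1} (distr_fun M X) \<and> strict_mono_on {0..1} (distr_fun M X) \<and>
     distr_fun M X 0 = 0 \<and> distr_fun M X 1 = 1"

end

theory Submission
  imports Defs
begin

(* Each X_i gets the distribution function F_i(x) = x + A_i(x) on [0,1], where A_i is a finite
   sum of small piecewise linear waves vanishing outside (0,1), so that the density 1 + A_i'
   stays above 1/2. As A_i integrates to 0, the mean is 1/2, and integrating by parts gives
   P(X_i > X_j) = int_0^1 (1 + A_i') F_j = 1/2 + int_0^1 A_j A_i'. This form is antisymmetric,
   and the waves are placed so that for j < i exactly one pair of them interacts: A_i contains
   a wave with one tent in the rising and one in the falling half of the first tent of A_j,
   weighted with a sign given by the arc between i and j. *)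

lemma fundamental_theorem_of_calculus_real:
  fixes f f' :: "real \<Rightarrow> real"
  assumes "finite S" "a \<le> b" "continuous_on {a..b} f"
    "\<And>x. x \<in> {a<..<b} - S \<Longrightarrow> (f has_real_derivative f' x) (at x)"
  shows "(f' has_integral (f b - f a)) {a..b}"
  using assms by (intro fundamental_theorem_of_calculus_interior_strong[of S])
    (auto simp: has_real_derivative_iff_has_vector_derivative)

lemma has_integral_by_parts_real:
  fixes f g f' g' :: "real \<Rightarrow> real"
  assumes "finite S" "a \<le> b" "continuous_on {a..b} f" "continuous_on {a..b} g"
    "\<And>x. x \<in> {a<..<b} - S \<Longrightarrow> (f has_real_derivative f' x) (at x)"
    "\<And>x. x \<in> {a<..<b} - S \<Longrightarrow> (g has_real_derivative g' x) (at x)"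
    "((\<lambda>x. f x * g' x) has_integral I) {a..b}"
  shows "((\<lambda>x. f' x * g x) has_integral (f b * g b - f a * g a - I)) {a..b}"
proof -
  have "((\<lambda>x. f x * g' x) has_integral (f b * g b - f a * g a - (f b * g b - f a * g a - I))) {a..b}"
    using assms(7) by simp
  with assms(5,6) show ?thesis
    by (intro integration_by_parts_interior_strong[OF bounded_bilinear_mult assms(1-4)])
      (simp_all add: has_real_derivative_iff_has_vector_derivative)
qed

section \<open>Probability measures with a density on the unit interval\<close>

definition density_on_unit :: "(real \<Rightarrow> real) \<Rightarrow> real measure" where
  "density_on_unit f = density lborel (\<lambda>x. ennreal (indicator {0..1} x * f x))"

lemma sets_density_on_unit [measurable_cong, simp]: "sets (density_on_unit f) = sets borel"
  by (simp add: density_on_unit_def)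

lemma nn_integral_density_on_unit:
  assumes "f \<in> borel_measurable borel" "g \<in> borel_measurable borel"
  shows "(\<integral>\<^sup>+x. g x \<partial>density_on_unit f) = (\<integral>\<^sup>+x. ennreal (indicator {0..1} x * f x) * g x \<partial>lborel)"
  unfolding density_on_unit_def using assms by (subst nn_integral_density) auto

lemma emeasure_density_on_unit_atMost:
  assumes "f \<in> borel_measurable borel" "\<And>x. 0 \<le> f x" "0 \<le> x" "x \<le> 1"
    "(f has_integral c) {0..x}"
  shows "emeasure (density_on_unit f) {..x} = ennreal c"
proof -
  have "emeasure (density_on_unit f) {..x} =
      (\<integral>\<^sup>+y. ennreal (indicator {0..1} y * f y) * indicator {..x} y \<partial>lborel)"
    unfolding density_on_unit_def using assms(1) by (subst emeasure_density) auto
  also have "\<dots> = (\<integral>\<^sup>+y. ennreal (indicator {0..x} y * f y) \<partial>lborel)"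
    using assms(4) by (intro nn_integral_cong) (auto simp: indicator_def)
  also have "\<dots> = ennreal c"
    using assms by (intro nn_integral_has_integral_lebesgue) auto
  finally show ?thesis .
qed

lemma emeasure_density_on_unit_lessThan:
  assumes "f \<in> borel_measurable borel" "\<And>x. 0 \<le> f x" "0 \<le> x" "x \<le> 1"
    "(f has_integral c) {0..x}"
  shows "emeasure (density_on_unit f) {..<x} = ennreal c"
proof -
  have "emeasure (density_on_unit f) {..<x} =
      (\<integral>\<^sup>+y. ennreal (indicator {0..1} y * f y) * indicator {..<x} y \<partial>lborel)"
    unfolding density_on_unit_def using assms(1) by (subst emeasure_density) auto
  also have "\<dots> = (\<integral>\<^sup>+y. ennreal (indicator {0..1} y * f y) * indicator {..x} y \<partial>lborel)"
    using AE_lborel_singleton[of x]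
    by (intro nn_integral_cong_AE) (auto simp: indicator_def elim!: eventually_mono)
  also have "\<dots> = emeasure (density_on_unit f) {..x}"
    unfolding density_on_unit_def using assms(1) by (subst emeasure_density) auto
  finally show ?thesis
    using emeasure_density_on_unit_atMost[OF assms] by simp
qed

lemma prob_space_density_on_unit:
  assumes "f \<in> borel_measurable borel" "\<And>x. 0 \<le> f x" "(f has_integral 1) {0..1}"
  shows "prob_space (density_on_unit f)"
proof
  have "emeasure (density_on_unit f) (space (density_on_unit f)) =
      (\<integral>\<^sup>+y. ennreal (indicator {0..1} y * f y) \<partial>lborel)"
    unfolding density_on_unit_def using assms(1) by (subst emeasure_density) auto
  also have "\<dots> = 1"
    using nn_integral_has_integral_lebesgue[OF _ assms(3)] assms(2) by simp
  finally show "emeasure (density_on_unit f) (space (density_on_unit f)) = 1" .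
qed

lemma mean_density_on_unit:
  assumes "f \<in> borel_measurable borel" "\<And>x. 0 \<le> f x" "((\<lambda>x. x * f x) has_integral m) {0..1}"
  shows "integral\<^sup>L (density_on_unit f) (\<lambda>x. x) = m"
proof -
  have nonneg: "0 \<le> indicator {0..1} x * (x * f x)" for x
    using assms(2)[of x] by (simp add: indicator_def)
  have "integral\<^sup>L (density_on_unit f) (\<lambda>x. x) = integral\<^sup>L lborel (\<lambda>x. indicator {0..1} x * (x * f x))"
    unfolding density_on_unit_def using assms(1,2) by (subst integral_density) (auto simp: ac_simps)
  also have "\<dots> = enn2real (\<integral>\<^sup>+x. ennreal (indicator {0..1} x * (x * f x)) \<partial>lborel)"
    using assms(1) nonneg by (intro integral_eq_nn_integral) auto
  also have "(\<integral>\<^sup>+x. ennreal (indicator {0..1} x * (x * f x)) \<partial>lborel) = ennreal m"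
    using assms(2,3) by (intro nn_integral_has_integral_lebesgue) auto
  finally show ?thesis
    using has_integral_nonneg[OF assms(3)] assms(2) by simp
qed

lemma emeasure_density_on_unit_pair_less:
  assumes f: "f \<in> borel_measurable borel" "\<And>x. 0 \<le> f x"
    and N: "prob_space N" "sets N = sets borel"
    and r: "((\<lambda>x. f x * measure N {..<x}) has_integral r) {0..1}"
  shows "emeasure (density_on_unit f \<Otimes>\<^sub>M N) {p. snd p < fst p} = ennreal r"
proof -
  interpret N: prob_space N
    by (rule N(1))
  have "{p \<in> space (borel \<Otimes>\<^sub>M borel). snd p < (fst p :: real)} \<in> sets (borel \<Otimes>\<^sub>M borel)"
    by measurable
  moreover have "sets (density_on_unit f \<Otimes>\<^sub>M N) = sets (borel \<Otimes>\<^sub>M borel)"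
    using N(2) by (intro sets_pair_measure_cong) auto
  ultimately have S: "{p. snd p < fst p} \<in> sets (density_on_unit f \<Otimes>\<^sub>M N)"
    by (simp add: space_pair_measure)
  have "mono (\<lambda>x. measure N {..<x})"
    using N(2) by (intro monoI N.finite_measure_mono) auto
  then have G: "(\<lambda>x. ennreal (measure N {..<x})) \<in> borel_measurable borel"
    using borel_measurable_mono measurable_compose measurable_ennreal by blast
  have "emeasure (density_on_unit f \<Otimes>\<^sub>M N) {p. snd p < fst p} =
      (\<integral>\<^sup>+x. emeasure N (Pair x -` {p. snd p < fst p}) \<partial>density_on_unit f)"
    by (rule N.emeasure_pair_measure_alt[OF S])
  also have "\<dots> = (\<integral>\<^sup>+x. ennreal (measure N {..<x}) \<partial>density_on_unit f)"
    using N(2) by (intro nn_integral_cong) (auto simp: N.emeasure_eq_measure vimage_def lessThan_def)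
  also have "\<dots> = (\<integral>\<^sup>+x. ennreal (indicator {0..1} x * f x) * ennreal (measure N {..<x}) \<partial>lborel)"
    using f(1) G by (rule nn_integral_density_on_unit)
  also have "\<dots> = (\<integral>\<^sup>+x. ennreal (indicator {0..1} x * (f x * measure N {..<x})) \<partial>lborel)"
    using f(2) by (intro nn_integral_cong) (simp add: ennreal_mult' mult.assoc)
  also have "\<dots> = ennreal r"
    using f r by (intro nn_integral_has_integral_lebesgue) auto
  finally show ?thesis .
qed

lemma distr_PiM_component_borel:
  assumes "\<And>i. prob_space (N i)" "\<And>i. sets (N i) = sets (borel :: 'a::topological_space measure)"
    "i \<in> I"
  shows "distr (PiM I N) borel (\<lambda>\<omega>. \<omega> i) = N i"
proof -
  have "distr (PiM I N) borel (\<lambda>\<omega>. \<omega> i) = distr (PiM I N) (N i) (\<lambda>\<omega>. \<omega> i)"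
    using assms(2) by (intro distr_cong) auto
  also have "\<dots> = N i"
    using assms(1,3) by (intro distr_PiM_component) auto
  finally show ?thesis .
qed

lemma indep_vars_PiM_components:
  assumes "\<And>i. prob_space (N i)" "\<And>i. sets (N i) = sets (borel :: 'a::topological_space measure)"
    "I \<noteq> {}"
  shows "prob_space.indep_vars (PiM I N) (\<lambda>_. borel) (\<lambda>i \<omega>. \<omega> i) I"
proof -
  interpret prob_space "PiM I N"
    using assms(1) by (intro prob_space_PiM) auto
  have rv: "random_variable borel (\<lambda>\<omega>. \<omega> i)" if "i \<in> I" for i
    using measurable_component_singleton[OF that, of N] assms(2)
    by (simp add: measurable_cong_sets[OF refl assms(2)])
  have "distr (PiM I N) (PiM I (\<lambda>_. borel)) (\<lambda>\<omega>. \<lambda>i\<in>I. \<omega> i) = distr (PiM I N) (PiM I N) (\<lambda>\<omega>. \<omega>)"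
    using assms(2) by (intro distr_cong sets_PiM_cong) (auto simp: space_PiM PiE_def extensional_def)
  also have "\<dots> = PiM I (\<lambda>i. distr (PiM I N) borel (\<lambda>\<omega>. \<omega> i))"
    using assms(1,2) by (simp add: distr_PiM_component_borel cong: PiM_cong)
  finally show ?thesis
    using rv assms(3) by (subst indep_vars_iff_distr_eq_PiM') auto
qed

lemma (in prob_space) indep_vars_imp_indep_var:
  assumes "indep_vars M' X I" "i \<in> I" "j \<in> I" "i \<noteq> j"
  shows "indep_var (M' i) (X i) (M' j) (X j)"
proof -
  have "indep_var (M' i) ((\<lambda>f. f i) \<circ> (\<lambda>\<omega>. restrict (\<lambda>k. X k \<omega>) {i}))
      (M' j) ((\<lambda>f. f j) \<circ> (\<lambda>\<omega>. restrict (\<lambda>k. X k \<omega>) {j}))"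
    using assms by (intro indep_var_compose[OF indep_var_restrict[OF assms(1)]]) auto
  then show ?thesis
    by (simp add: comp_def)
qed

lemma (in prob_space) measure_less_indep_var:
  fixes X Y :: "'a \<Rightarrow> real"
  assumes "indep_var borel X borel Y"
  shows "measure M {\<omega> \<in> space M. Y \<omega> < X \<omega>} =
    measure (distr M borel X \<Otimes>\<^sub>M distr M borel Y) {p. snd p < fst p}"
proof -
  have rv: "random_variable borel X" "random_variable borel Y"
    using indep_var_rv1[OF assms] indep_var_rv2[OF assms] .
  have "{p \<in> space (borel \<Otimes>\<^sub>M borel). snd p < (fst p :: real)} \<in> sets (borel \<Otimes>\<^sub>M borel)"
    by measurable
  then have S: "{p. snd p < fst p} \<in> sets (borel \<Otimes>\<^sub>M borel :: (real \<times> real) measure)"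
    by (simp add: space_pair_measure)
  have "measure M {\<omega> \<in> space M. Y \<omega> < X \<omega>} =
      measure M ((\<lambda>\<omega>. (X \<omega>, Y \<omega>)) -` {p. snd p < fst p} \<inter> space M)"
    by (rule arg_cong[where f="measure M"]) auto
  also have "\<dots> = measure (distr M (borel \<Otimes>\<^sub>M borel) (\<lambda>\<omega>. (X \<omega>, Y \<omega>))) {p. snd p < fst p}"
    using rv S by (intro measure_distr[symmetric]) auto
  also have "distr M (borel \<Otimes>\<^sub>M borel) (\<lambda>\<omega>. (X \<omega>, Y \<omega>)) = distr M borel X \<Otimes>\<^sub>M distr M borel Y"
    using assms by (simp add: indep_var_distribution_eq)
  finally show ?thesis .
qed

lemma (in prob_space) continuous_rv_01I:
  assumes "random_variable borel X" "\<And>x. 0 \<le> x \<Longrightarrow> x \<le> 1 \<Longrightarrow> measure (distr M borel X) {..x} = F x"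
    "continuous_on {0..1} F" "\<And>x y. x < y \<Longrightarrow> F x < F y" "F 0 = 0" "F 1 = 1"
  shows "continuous_rv_01 M X"
proof -
  have F: "distr_fun M X x = F x" if "0 \<le> x" "x \<le> 1" for x
  proof -
    have "distr_fun M X x = measure M (X -` {..x} \<inter> space M)"
      unfolding distr_fun_def by (rule arg_cong[where f="measure M"]) auto
    also have "\<dots> = F x"
      using assms(1,2) that by (simp add: measure_distr)
    finally show ?thesis .
  qed
  show ?thesis
    unfolding continuous_rv_01_def
  proof (intro conjI)
    show "continuous_on {0..1} (distr_fun M X)"
      using assms(3) by (rule continuous_on_eq) (simp add: F)
    show "strict_mono_on {0..1} (distr_fun M X)"
      by (rule strict_mono_onI) (simp add: F assms(4))
  qed (use assms F in auto)
qed

section \<open>Tent functions\<close>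

type_synonym shape = "real \<Rightarrow> real \<Rightarrow> real \<Rightarrow> real"

definition tent :: shape where
  "tent a l x = max 0 (min (x - a) (a + l - x))"

definition tent_slope :: shape where
  "tent_slope a l x =
     (if a < x \<and> x < a + l/2 then 1 else if a + l/2 < x \<and> x < a + l then -1 else 0)"

definition tent_primitive :: shape where
  "tent_primitive a l x =
     (let u = max a (min x (a + l/2)); v = max (a + l/2) (min x (a + l))
      in (u - a)^2/2 + (v - (a + l/2)) * (a + l) - (v^2 - (a + l/2)^2)/2)"

lemma tent_eq_0: "x \<le> a \<or> a + l \<le> x \<Longrightarrow> tent a l x = 0"
  unfolding tent_def by auto

lemma tent_nonzero_imp: "tent a l x \<noteq> 0 \<Longrightarrow> a < x \<and> x < a + l"
  unfolding tent_def by (auto simp: max_def min_def split: if_splits)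

lemma tent_slope_nonzero_imp: "tent_slope a l x \<noteq> 0 \<Longrightarrow> a < x \<and> x < a + l"
  unfolding tent_slope_def by (auto split: if_splits)

lemma tent_slope_abs_le: "\<bar>tent_slope a l x\<bar> \<le> 1"
  unfolding tent_slope_def by auto

lemma tent_slope_rising: "a < x \<Longrightarrow> x < a + l/2 \<Longrightarrow> tent_slope a l x = 1"
  unfolding tent_slope_def by auto

lemma tent_slope_falling: "a + l/2 < x \<Longrightarrow> x < a + l \<Longrightarrow> tent_slope a l x = -1"
  unfolding tent_slope_def by auto

lemma continuous_on_tent [continuous_intros]: "continuous_on S (tent a l)"
  unfolding tent_def by (intro continuous_intros)

lemma continuous_on_tent_primitive: "continuous_on S (tent_primitive a l)"
  unfolding tent_primitive_def Let_def by (intro continuous_intros) auto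

lemma tent_slope_measurable [measurable]: "tent_slope a l \<in> borel_measurable borel"
  unfolding tent_slope_def by measurable

lemma tent_has_real_derivative:
  assumes "l > 0" "x \<notin> {a, a + l/2, a + l}"
  shows "(tent a l has_real_derivative tent_slope a l x) (at x)"
proof -
  consider "x < a" | "a < x" "x < a + l/2" | "a + l/2 < x" "x < a + l" | "a + l < x"
    using assms by force
  then show ?thesis
  proof cases
    case 1
    show ?thesis
      by (rule has_field_derivative_transform_within_open[where f="\<lambda>_. 0" and S="{..<a}"])
        (use 1 in \<open>auto simp: tent_slope_def tent_def\<close>)
  next
    case 2
    show ?thesis
      by (rule has_field_derivative_transform_within_open[where f="\<lambda>x. x - a" and S="{a<..<a+l/2}"])
        (use 2 in \<open>auto simp: tent_slope_def tent_def intro!: derivative_eq_intros\<close>)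
  next
    case 3
    show ?thesis
      by (rule has_field_derivative_transform_within_open[where f="\<lambda>x. a + l - x" and S="{a+l/2<..<a+l}"])
        (use 3 in \<open>auto simp: tent_slope_def tent_def intro!: derivative_eq_intros\<close>)
  next
    case 4
    show ?thesis
      by (rule has_field_derivative_transform_within_open[where f="\<lambda>_. 0" and S="{a+l<..}"])
        (use 4 assms in \<open>auto simp: tent_slope_def tent_def\<close>)
  qed
qed

lemma tent_primitive_has_real_derivative:
  assumes "l > 0" "x \<notin> {a, a + l/2, a + l}"
  shows "(tent_primitive a l has_real_derivative tent a l x) (at x)"
proof -
  consider "x < a" | "a < x" "x < a + l/2" | "a + l/2 < x" "x < a + l" | "a + l < x"
    using assms by force
  then show ?thesis
  proof cases
    case 1
    show ?thesis
      by (rule has_field_derivative_transform_within_open[where f="\<lambda>_. 0" and S="{..<a}"])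
        (use 1 assms in \<open>auto simp: tent_primitive_def tent_def Let_def\<close>)
  next
    case 2
    show ?thesis
      by (rule has_field_derivative_transform_within_open[where f="\<lambda>x. (x - a)^2/2" and S="{a<..<a+l/2}"])
        (use 2 in \<open>auto simp: tent_primitive_def tent_def Let_def intro!: derivative_eq_intros\<close>)
  next
    case 3
    show ?thesis
      by (rule has_field_derivative_transform_within_open[where
            f="\<lambda>x. (l/2)^2/2 + (x - (a + l/2)) * (a + l) - (x^2 - (a + l/2)^2)/2" and S="{a+l/2<..<a+l}"])
        (use 3 assms in \<open>auto simp: tent_primitive_def tent_def Let_def algebra_simps
           intro!: derivative_eq_intros\<close>)
  next
    case 4
    show ?thesis
      by (rule has_field_derivative_transform_within_open[where
            f="\<lambda>_. tent_primitive a l (a + l + 1)" and S="{a+l<..}"])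
        (use 4 assms in \<open>auto simp: tent_primitive_def tent_def Let_def\<close>)
  qed
qed

lemma tent_has_integral:
  assumes "l > 0" "a0 \<le> a" "a + l \<le> b0"
  shows "(tent a l has_integral l^2/4) {a0..b0}"
proof -
  have "(tent a l has_integral (tent_primitive a l b0 - tent_primitive a l a0)) {a0..b0}"
    using assms
    by (intro fundamental_theorem_of_calculus_real[of "{a, a + l/2, a + l}"]
        tent_primitive_has_real_derivative continuous_on_tent_primitive) auto
  moreover have "tent_primitive a l b0 - tent_primitive a l a0 = l^2/4"
    using assms by (simp add: tent_primitive_def Let_def power2_eq_square field_simps)
  ultimately show ?thesis by simp
qed

lemma tent_slope_mult_tent_rising:
  "a \<le> b \<Longrightarrow> b + m \<le> a + l/2 \<Longrightarrow> tent_slope a l x * tent b m x = tent b m x"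
  using tent_nonzero_imp[of b m x] tent_slope_rising[of a x l]
  by (cases "tent b m x = 0") auto

lemma tent_slope_mult_tent_falling:
  "a + l/2 \<le> b \<Longrightarrow> b + m \<le> a + l \<Longrightarrow> tent_slope a l x * tent b m x = - tent b m x"
  using tent_nonzero_imp[of b m x] tent_slope_falling[of a l x]
  by (cases "tent b m x = 0") auto

lemma tent_mult_tent_slope_has_integral:
  assumes "0 < l" "0 < m" "0 \<le> a" "a + l \<le> 1" "0 \<le> b" "b + m \<le> 1"
    and "((\<lambda>x. tent_slope a l x * tent b m x) has_integral I) {0..1}"
  shows "((\<lambda>x. tent a l x * tent_slope b m x) has_integral -I) {0..1}"
proof -
  have "((\<lambda>x. tent b m x * tent_slope a l x) has_integral I) {0..1}"
    using assms(7) by (simp add: mult.commute)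
  then have "((\<lambda>x. tent_slope b m x * tent a l x) has_integral
      (tent b m 1 * tent a l 1 - tent b m 0 * tent a l 0 - I)) {0..1}"
    using assms(1,2)
    by (intro has_integral_by_parts_real[of "{a, a + l/2, a + l, b, b + m/2, b + m}"]
        continuous_on_tent) (auto intro!: tent_has_real_derivative)
  then show ?thesis
    using assms(3-6) by (simp add: tent_eq_0 mult.commute)
qed

lemma tent_mult_tent_slope_rising:
  assumes "0 < l" "0 < m" "0 \<le> a" "a + l \<le> 1" "a \<le> b" "b + m \<le> a + l/2"
  shows "((\<lambda>x. tent a l x * tent_slope b m x) has_integral -(m^2/4)) {0..1}"
  using assms tent_has_integral[of m 0 b 1]
  by (intro tent_mult_tent_slope_has_integral) (simp_all add: tent_slope_mult_tent_rising)

lemma tent_mult_tent_slope_falling: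
  assumes "0 < l" "0 < m" "0 \<le> a" "a + l \<le> 1" "a + l/2 \<le> b" "b + m \<le> a + l"
  shows "((\<lambda>x. tent a l x * tent_slope b m x) has_integral m^2/4) {0..1}"
  using assms has_integral_neg[OF tent_has_integral[of m 0 b 1]]
    tent_mult_tent_slope_has_integral[of l m a b "-(m^2/4)"]
  by (simp add: tent_slope_mult_tent_falling)

section \<open>Profiles\<close>

(* Block j = (L_j, 2 L_j) with L_j = 2^-(j+1) carries the wave of X_j. For k < i, the wave
   coupling X_i to X_k consists of two tents of width 2^-(i-k+2) L_k, one in the rising and one
   in the falling half of the first tent of block k; the widths halve as i grows, so the slots
   of different i are disjoint. *)
definition block_start :: "nat \<Rightarrow> real" where
  "block_start j = (1/2)^(j+1)"

definition block :: "nat \<Rightarrow> real set" where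
  "block j = {block_start j<..<2 * block_start j}"

definition pair_width :: "nat \<Rightarrow> nat \<Rightarrow> real" where
  "pair_width k i = block_start k * (1/2)^(i - k + 2)"

definition pair_start :: "nat \<Rightarrow> nat \<Rightarrow> real" where
  "pair_start k i = block_start k + pair_width k i"

definition pair_slot :: "nat \<Rightarrow> nat \<Rightarrow> real set" where
  "pair_slot k i = {pair_start k i<..<pair_start k i + pair_width k i} \<union>
     {pair_start k i + block_start k / 4<..<pair_start k i + block_start k / 4 + pair_width k i}"

definition pair_weight :: "(nat \<times> nat) set \<Rightarrow> nat \<Rightarrow> nat \<Rightarrow> real" where
  "pair_weight U i k = (if (i, k) \<in> U then -1 else 1) / 16"

definition wave :: "shape \<Rightarrow> real \<Rightarrow> real \<Rightarrow> real \<Rightarrow> real \<Rightarrow> real" where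
  "wave \<phi> a b l x = \<phi> a l x - \<phi> b l x"

definition block_wave :: "shape \<Rightarrow> nat \<Rightarrow> real \<Rightarrow> real" where
  "block_wave \<phi> i = wave \<phi> (block_start i) (block_start i + block_start i / 2) (block_start i / 2)"

definition pair_wave :: "shape \<Rightarrow> nat \<Rightarrow> nat \<Rightarrow> real \<Rightarrow> real" where
  "pair_wave \<phi> k i = wave \<phi> (pair_start k i) (pair_start k i + block_start k / 4) (pair_width k i)"

definition profile ::
  "(nat \<times> nat) set \<Rightarrow> shape \<Rightarrow> nat \<Rightarrow> real \<Rightarrow> real" where
  "profile U \<phi> i x = block_wave \<phi> i x / 8 + (\<Sum>k<i. pair_weight U i k * pair_wave \<phi> k i x)"

definition localized :: "shape \<Rightarrow> bool" where
  "localized \<phi> \<longleftrightarrow> (\<forall>a l x. \<phi> a l x \<noteq> 0 \<longrightarrow> a < x \<and> x < a + l)"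

lemma localized_tent: "localized tent"
  using tent_nonzero_imp unfolding localized_def by blast

lemma localized_tent_slope: "localized tent_slope"
  using tent_slope_nonzero_imp unfolding localized_def by blast

lemma localizedD: "localized \<phi> \<Longrightarrow> \<phi> a l x \<noteq> 0 \<Longrightarrow> a < x \<and> x < a + l"
  unfolding localized_def by blast

lemma block_start_pos: "0 < block_start j"
  by (simp add: block_start_def)

lemma block_start_le: "2 * block_start j \<le> 1"
  by (simp add: block_start_def power_le_one)

lemma block_start_antimono: "j < k \<Longrightarrow> 2 * block_start k \<le> block_start j"
proof -
  assume "j < k"
  then have "(1/2::real)^k \<le> (1/2)^(j+1)"
    by (intro power_decreasing) auto
  then show ?thesis
    by (simp add: block_start_def)
qed

lemma block_unique: "x \<in> block j \<Longrightarrow> x \<in> block k \<Longrightarrow> j = k"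
  using block_start_antimono[of j k] block_start_antimono[of k j] unfolding block_def
  by (cases j k rule: linorder_cases) auto

lemma block_subset: "block j \<subseteq> {0<..<1}"
  using block_start_pos[of j] block_start_le[of j] unfolding block_def by auto

lemma pair_width_pos: "0 < pair_width k i"
  by (simp add: pair_width_def block_start_pos)

lemma pair_width_halves: "k < i \<Longrightarrow> i < i' \<Longrightarrow> 2 * pair_width k i' \<le> pair_width k i"
proof -
  assume "k < i" "i < i'"
  then have "(1/2::real)^(i' - k + 1) \<le> (1/2)^(i - k + 2)"
    by (intro power_decreasing) auto
  then have "block_start k * (2 * (1/2)^(i' - k + 2)) \<le> block_start k * (1/2)^(i - k + 2)"
    using block_start_pos[of k] by (intro mult_left_mono) auto
  then show ?thesis
    by (simp add: pair_width_def)
qed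

lemma pair_width_le: "k < i \<Longrightarrow> pair_width k i \<le> block_start k / 8"
proof -
  assume "k < i"
  then have "(1/2::real)^(i - k + 2) \<le> (1/2)^3"
    by (intro power_decreasing) auto
  then have "block_start k * (1/2)^(i - k + 2) \<le> block_start k * (1/2)^3"
    using block_start_pos[of k] by (intro mult_left_mono) auto
  then show ?thesis
    by (simp add: pair_width_def power3_eq_cube)
qed

lemma pair_slot_subset: "k < i \<Longrightarrow> pair_slot k i \<subseteq> {block_start k<..<block_start k + block_start k / 2}"
  using pair_width_le[of k i] pair_width_pos[of k i]
  unfolding pair_slot_def pair_start_def by auto

lemma pair_slots_disjoint:
  assumes "k < i" "k < i'" "i \<noteq> i'"
  shows "pair_slot k i \<inter> pair_slot k i' = {}"
proof -
  have "pair_slot k i \<inter> pair_slot k i' = {}" if "k < i" "i < i'" for i i'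
    using pair_width_halves[OF that] pair_width_le[of k i] that pair_width_pos[of k i']
    unfolding pair_slot_def pair_start_def by auto
  with assms show ?thesis
    by (cases i i' rule: linorder_cases) auto
qed

lemma pair_weight_neg_iff: "pair_weight U i k < 0 \<longleftrightarrow> (i, k) \<in> U"
  by (simp add: pair_weight_def)

lemma pair_weight_pos_iff: "0 < pair_weight U i k \<longleftrightarrow> (i, k) \<notin> U"
  by (simp add: pair_weight_def)

lemma block_wave_nonzero_imp: "localized \<phi> \<Longrightarrow> block_wave \<phi> i x \<noteq> 0 \<Longrightarrow> x \<in> block i"
  using localizedD[of \<phi> "block_start i" "block_start i / 2" x]
    localizedD[of \<phi> "block_start i + block_start i / 2" "block_start i / 2" x]
  unfolding block_wave_def wave_def block_def by force

lemma pair_wave_nonzero_imp: "localized \<phi> \<Longrightarrow> pair_wave \<phi> k i x \<noteq> 0 \<Longrightarrow> x \<in> pair_slot k i"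
  using localizedD[of \<phi> "pair_start k i" "pair_width k i" x]
    localizedD[of \<phi> "pair_start k i + block_start k / 4" "pair_width k i" x]
  unfolding pair_wave_def wave_def pair_slot_def by force

lemma pair_wave_nonzero_imp_block:
  "localized \<phi> \<Longrightarrow> k < i \<Longrightarrow> pair_wave \<phi> k i x \<noteq> 0 \<Longrightarrow> x \<in> block k"
  using pair_wave_nonzero_imp[of \<phi> k i x] pair_slot_subset[of k i]
  unfolding block_def by auto

lemma profile_on_block:
  assumes \<phi>: "localized \<phi>" and x: "x \<in> block m"
  shows "profile U \<phi> i x = (if m = i then block_wave \<phi> i x / 8 else 0) +
    (if m < i then pair_weight U i m * pair_wave \<phi> m i x else 0)"
proof -
  have "block_wave \<phi> i x = 0" if "m \<noteq> i"
    using block_wave_nonzero_imp[OF \<phi>] block_unique x that by blast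
  moreover have "pair_wave \<phi> k i x = 0" if "k < i" "k \<noteq> m" for k
    using pair_wave_nonzero_imp_block[OF \<phi> that(1)] block_unique x that(2) by blast
  then have "(\<Sum>k<i. pair_weight U i k * pair_wave \<phi> k i x) =
      (\<Sum>k<i. if k = m then pair_weight U i m * pair_wave \<phi> m i x else 0)"
    by (intro sum.cong) auto
  ultimately show ?thesis
    unfolding profile_def by (simp add: sum.delta')
qed

lemma profile_off_blocks:
  assumes "localized \<phi>" "\<And>m. x \<notin> block m"
  shows "profile U \<phi> i x = 0"
proof -
  have "block_wave \<phi> i x = 0"
    using assms block_wave_nonzero_imp by blast
  moreover have "pair_wave \<phi> k i x = 0" if "k < i" for k
    using assms pair_wave_nonzero_imp_block that by blast
  ultimately show ?thesis
    unfolding profile_def by simp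
qed

lemma profile_eq_0_outside: "localized \<phi> \<Longrightarrow> x \<le> 0 \<or> 1 \<le> x \<Longrightarrow> profile U \<phi> i x = 0"
  using block_subset by (intro profile_off_blocks) fastforce+

lemma localized_first_tent_imp_block:
  "localized \<phi> \<Longrightarrow> \<phi> (block_start j) (block_start j / 2) x \<noteq> 0 \<Longrightarrow> x \<in> block j"
  using localizedD[of \<phi> "block_start j" "block_start j / 2" x] block_start_pos[of j]
  unfolding block_def by auto

lemma profile_mult:
  assumes \<phi>: "localized \<phi>" and \<psi>: "localized \<psi>" and "j < i"
  shows "profile U \<phi> j x * profile U \<psi> i x =
    pair_weight U i j / 8 * (\<phi> (block_start j) (block_start j / 2) x * pair_wave \<psi> j i x)"
proof (cases "\<exists>m. x \<in> block m")
  case False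
  then have "profile U \<phi> j x = 0"
    by (intro profile_off_blocks[OF \<phi>]) auto
  moreover have "\<phi> (block_start j) (block_start j / 2) x = 0"
    using localized_first_tent_imp_block[OF \<phi>] False by blast
  ultimately show ?thesis
    by simp
next
  case True
  then obtain m where m: "x \<in> block m"
    by blast
  have off_block: "\<phi> (block_start j) (block_start j / 2) x = 0" if "m \<noteq> j"
    using localized_first_tent_imp_block[OF \<phi>] block_unique m that by blast
  consider "m = j" | "m < j" | "j < m"
    by linarith
  then show ?thesis
  proof cases
    case 1
    have "\<phi> (block_start j + block_start j / 2) (block_start j / 2) x = 0"
      if "pair_wave \<psi> j i x \<noteq> 0"
      using pair_wave_nonzero_imp[OF \<psi> that] pair_slot_subset[OF \<open>j < i\<close>]
        localizedD[OF \<phi>, of "block_start j + block_start j / 2" "block_start j / 2" x] by force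
    then have "block_wave \<phi> j x * pair_wave \<psi> j i x =
        \<phi> (block_start j) (block_start j / 2) x * pair_wave \<psi> j i x"
      unfolding block_wave_def wave_def by (cases "pair_wave \<psi> j i x = 0") auto
    then show ?thesis
      using profile_on_block[OF \<phi> m] profile_on_block[OF \<psi> m] 1 \<open>j < i\<close> by simp
  next
    case 2
    have "pair_wave \<phi> m j x * pair_wave \<psi> m i x = 0"
      using pair_wave_nonzero_imp[OF \<phi>, of m j x] pair_wave_nonzero_imp[OF \<psi>, of m i x]
        pair_slots_disjoint[of m j i] 2 \<open>j < i\<close> by fastforce
    then show ?thesis
      using profile_on_block[OF \<phi> m] profile_on_block[OF \<psi> m] 2 \<open>j < i\<close> off_block by auto
  next
    case 3
    then show ?thesis
      using profile_on_block[OF \<phi> m, of U j] off_block by simp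
  qed
qed

lemma profile_abs_le:
  assumes \<phi>: "localized \<phi>" and bound: "\<And>a l x. \<bar>\<phi> a l x\<bar> \<le> 1"
  shows "\<bar>profile U \<phi> i x\<bar> \<le> 3/8"
proof (cases "\<exists>m. x \<in> block m")
  case False
  then show ?thesis
    using profile_off_blocks[OF \<phi>] by simp
next
  case True
  then obtain m where m: "x \<in> block m"
    by blast
  have wave_bound: "\<bar>wave \<phi> a b l x\<bar> \<le> 2" for a b l
    using bound[of a l x] bound[of b l x] unfolding wave_def by linarith
  have "\<bar>block_wave \<phi> i x / 8\<bar> \<le> 1/4"
    using wave_bound unfolding block_wave_def by simp
  moreover have "\<bar>pair_weight U i m * pair_wave \<phi> m i x\<bar> \<le> 1/8"
    using wave_bound[of "pair_start m i" "pair_start m i + block_start m / 4" "pair_width m i"]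
    unfolding pair_wave_def by (simp add: pair_weight_def abs_mult)
  ultimately show ?thesis
    using profile_on_block[OF \<phi> m, of U i] by auto
qed

lemma wave_has_integral_0:
  assumes "\<And>a. 0 \<le> a \<Longrightarrow> a + l \<le> 1 \<Longrightarrow> (\<phi> a l has_integral c) {0..1}"
    "0 \<le> a" "a \<le> b" "b + l \<le> 1" "0 \<le> l"
  shows "(wave \<phi> a b l has_integral 0) {0..1}"
  using has_integral_diff[OF assms(1)[of a] assms(1)[of b]] assms(2-5)
  unfolding wave_def[abs_def] by simp

lemma profile_has_integral_0:
  assumes "\<And>a l. 0 < l \<Longrightarrow> 0 \<le> a \<Longrightarrow> a + l \<le> 1 \<Longrightarrow> (\<phi> a l has_integral c l) {0..1}"
  shows "(profile U \<phi> i has_integral 0) {0..1}"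
proof -
  have "(block_wave \<phi> i has_integral 0) {0..1}"
    unfolding block_wave_def using block_start_pos[of i] block_start_le[of i]
    by (intro wave_has_integral_0[where c="c (block_start i / 2)"] assms) auto
  moreover have "(pair_wave \<phi> k i has_integral 0) {0..1}" if "k < i" for k
    unfolding pair_wave_def
    using pair_slot_subset[OF that] pair_width_le[OF that] pair_width_pos[of k i]
      block_start_pos[of k] block_start_le[of k]
    by (intro wave_has_integral_0[where c="c (pair_width k i)"] assms) (auto simp: pair_start_def)
  ultimately have "((\<lambda>x. block_wave \<phi> i x / 8 + (\<Sum>k<i. pair_weight U i k * pair_wave \<phi> k i x))
      has_integral (0 / 8 + (\<Sum>k<i. pair_weight U i k * 0))) {0..1}"
    by (intro has_integral_add has_integral_sum has_integral_divide has_integral_mult_right) auto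
  then show ?thesis
    unfolding profile_def[abs_def] by simp
qed

definition wave_kinks :: "real \<Rightarrow> real \<Rightarrow> real \<Rightarrow> real set" where
  "wave_kinks a b l = {a, a + l/2, a + l, b, b + l/2, b + l}"

definition profile_kinks :: "nat \<Rightarrow> real set" where
  "profile_kinks i = wave_kinks (block_start i) (block_start i + block_start i / 2) (block_start i / 2) \<union>
     (\<Union>k<i. wave_kinks (pair_start k i) (pair_start k i + block_start k / 4) (pair_width k i))"

lemma finite_profile_kinks: "finite (profile_kinks i)"
  unfolding profile_kinks_def wave_kinks_def by auto

lemma wave_tent_has_real_derivative:
  "0 < l \<Longrightarrow> x \<notin> wave_kinks a b l \<Longrightarrow>
    (wave tent a b l has_real_derivative wave tent_slope a b l x) (at x)"
  unfolding wave_def[abs_def] wave_kinks_def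
  by (intro DERIV_diff tent_has_real_derivative) auto

lemma profile_tent_has_real_derivative:
  assumes "x \<notin> profile_kinks i"
  shows "(profile U tent i has_real_derivative profile U tent_slope i x) (at x)"
proof -
  have "(block_wave tent i has_real_derivative block_wave tent_slope i x) (at x)"
    unfolding block_wave_def using assms block_start_pos[of i]
    by (intro wave_tent_has_real_derivative) (auto simp: profile_kinks_def)
  moreover have "(pair_wave tent k i has_real_derivative pair_wave tent_slope k i x) (at x)"
    if "k < i" for k
    unfolding pair_wave_def using assms pair_width_pos[of k i] that
    by (intro wave_tent_has_real_derivative) (auto simp: profile_kinks_def)
  ultimately show ?thesis
    unfolding profile_def[abs_def]
    by (intro DERIV_add DERIV_cdivide DERIV_sum DERIV_cmult) auto
qed

lemma continuous_on_profile_tent [continuous_intros]: "continuous_on S (profile U tent i)"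
  unfolding profile_def[abs_def] block_wave_def pair_wave_def wave_def[abs_def]
  by (intro continuous_intros) auto

lemma profile_tent_slope_measurable [measurable]: "profile U tent_slope i \<in> borel_measurable borel"
  unfolding profile_def[abs_def] block_wave_def pair_wave_def wave_def[abs_def]
  by measurable

lemma tent_mult_pair_wave_has_integral:
  assumes "j < i"
  shows "((\<lambda>x. tent (block_start j) (block_start j / 2) x * pair_wave tent_slope j i x)
    has_integral -(pair_width j i^2/2)) {0..1}"
proof -
  have geometry: "0 < block_start j" "2 * block_start j \<le> 1" "0 < pair_width j i"
    "pair_width j i \<le> block_start j / 8"
    using block_start_pos block_start_le pair_width_pos pair_width_le[OF assms] .
  have "((\<lambda>x. tent (block_start j) (block_start j / 2) x * tent_slope (pair_start j i) (pair_width j i) x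
      - tent (block_start j) (block_start j / 2) x * tent_slope (pair_start j i + block_start j / 4) (pair_width j i) x)
     has_integral (-(pair_width j i^2/4) - pair_width j i^2/4)) {0..1}"
    using geometry
    by (intro has_integral_diff tent_mult_tent_slope_rising tent_mult_tent_slope_falling)
      (auto simp: pair_start_def)
  then show ?thesis
    by (simp add: pair_wave_def wave_def right_diff_distrib)
qed

lemma profile_interaction_has_integral:
  assumes "j < i"
  shows "((\<lambda>x. profile U tent j x * profile U tent_slope i x)
    has_integral -(pair_weight U i j * pair_width j i^2 / 16)) {0..1}"
  using has_integral_mult_right[OF tent_mult_pair_wave_has_integral[OF assms], of "pair_weight U i j / 8"]
  by (simp add: profile_mult[OF localized_tent localized_tent_slope assms])

lemma profile_tent_has_integral: "(profile U tent i has_integral 0) {0..1}"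
  by (rule profile_has_integral_0[where c="\<lambda>l. l^2/4"]) (auto intro: tent_has_integral)

lemma profile_tent_by_parts:
  assumes "((\<lambda>x. profile U tent i x * f' x) has_integral J) {0..1}"
    "continuous_on {0..1} f" "finite S"
    "\<And>x. x \<in> {0<..<1} - S \<Longrightarrow> (f has_real_derivative f' x) (at x)"
  shows "((\<lambda>x. f x * profile U tent_slope i x) has_integral -J) {0..1}"
proof -
  have "((\<lambda>x. profile U tent_slope i x * f x) has_integral
      (profile U tent i 1 * f 1 - profile U tent i 0 * f 0 - J)) {0..1}"
  proof (rule has_integral_by_parts_real[where S="S \<union> profile_kinks i"])
    show "finite (S \<union> profile_kinks i)"
      using assms(3) finite_profile_kinks by blast
    show "(profile U tent i has_real_derivative profile U tent_slope i x) (at x)"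
      if "x \<in> {0<..<1} - (S \<union> profile_kinks i)" for x
      using that by (intro profile_tent_has_real_derivative) blast
    show "(f has_real_derivative f' x) (at x)" if "x \<in> {0<..<1} - (S \<union> profile_kinks i)" for x
      using that by (intro assms(4)) blast
  qed (use assms(1,2) continuous_on_profile_tent in auto)
  then show ?thesis
    by (simp add: profile_eq_0_outside localized_tent mult.commute)
qed

lemma profile_tent_slope_first_moment: "((\<lambda>x. x * profile U tent_slope i x) has_integral 0) {0..1}"
proof -
  have "((\<lambda>x. profile U tent i x * 1) has_integral 0) {0..1}"
    using profile_tent_has_integral by simp
  then have "((\<lambda>x. x * profile U tent_slope i x) has_integral -0) {0..1}"
    by (rule profile_tent_by_parts[where S="{}"]) (auto intro: continuous_on_id DERIV_ident)
  then show ?thesis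
    by simp
qed

lemma profile_interaction_antisym:
  assumes "((\<lambda>x. profile U tent j x * profile U tent_slope i x) has_integral Q) {0..1}"
  shows "((\<lambda>x. profile U tent i x * profile U tent_slope j x) has_integral -Q) {0..1}"
  using assms continuous_on_profile_tent finite_profile_kinks profile_tent_has_real_derivative
  by (rule profile_tent_by_parts[where S="profile_kinks i"]) blast

section \<open>The bump distributions\<close>

definition bump_cdf :: "(nat \<times> nat) set \<Rightarrow> nat \<Rightarrow> real \<Rightarrow> real" where
  "bump_cdf U i x = x + profile U tent i x"

definition bump_density :: "(nat \<times> nat) set \<Rightarrow> nat \<Rightarrow> real \<Rightarrow> real" where
  "bump_density U i x = 1 + profile U tent_slope i x"

lemma bump_density_ge: "1/2 \<le> bump_density U i x"
  using profile_abs_le[OF localized_tent_slope tent_slope_abs_le, of U i x]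
  unfolding bump_density_def by linarith

lemma bump_density_nonneg: "0 \<le> bump_density U i x"
  using bump_density_ge[of U i x] by linarith

lemma bump_density_measurable [measurable]: "bump_density U i \<in> borel_measurable borel"
  unfolding bump_density_def[abs_def] by measurable

lemma continuous_on_bump_cdf: "continuous_on S (bump_cdf U i)"
  unfolding bump_cdf_def[abs_def] by (intro continuous_intros)

lemma bump_cdf_0: "bump_cdf U i 0 = 0" and bump_cdf_1: "bump_cdf U i 1 = 1"
  by (simp_all add: bump_cdf_def profile_eq_0_outside localized_tent)

lemma bump_density_has_integral:
  "a \<le> b \<Longrightarrow> (bump_density U i has_integral (bump_cdf U i b - bump_cdf U i a)) {a..b}"
  unfolding bump_cdf_def[abs_def] bump_density_def[abs_def]
  by (intro fundamental_theorem_of_calculus_real[of "profile_kinks i"])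
    (auto simp: finite_profile_kinks intro!: derivative_eq_intros continuous_intros
      profile_tent_has_real_derivative)

lemma bump_cdf_increment: "x \<le> y \<Longrightarrow> (y - x) / 2 \<le> bump_cdf U i y - bump_cdf U i x"
  using has_integral_le[OF has_integral_const_real[of "1/2" x y] bump_density_has_integral]
    bump_density_ge by auto

lemma bump_cdf_strict_mono:
  assumes "x < y"
  shows "bump_cdf U i x < bump_cdf U i y"
proof -
  have "(y - x) / 2 \<le> bump_cdf U i y - bump_cdf U i x"
    using assms by (intro bump_cdf_increment) simp
  with assms show ?thesis
    by (simp add: field_simps)
qed

lemma bump_cdf_nonneg: "0 \<le> x \<Longrightarrow> 0 \<le> bump_cdf U i x"
  using bump_cdf_increment[of 0 x U i] by (simp add: bump_cdf_0)

lemma bump_density_first_moment: "((\<lambda>x. x * bump_density U i x) has_integral 1/2) {0..1}"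
proof -
  have "((\<lambda>x. x) has_integral (1^2/2 - 0^2/2)) {0..1::real}"
    by (intro fundamental_theorem_of_calculus_real[of "{}"])
      (auto intro!: derivative_eq_intros continuous_intros)
  from has_integral_add[OF this profile_tent_slope_first_moment] show ?thesis
    by (simp add: bump_density_def algebra_simps)
qed

lemma bump_win_has_integral:
  assumes "tournament UNIV U" "i \<noteq> j"
  obtains Q where "((\<lambda>x. bump_density U i x * bump_cdf U j x) has_integral (1/2 + Q)) {0..1}"
    and "0 < Q \<longleftrightarrow> (i, j) \<in> U"
proof -
  obtain Q where Q: "((\<lambda>x. profile U tent j x * profile U tent_slope i x) has_integral Q) {0..1}"
    and sign: "0 < Q \<longleftrightarrow> (i, j) \<in> U"
  proof (cases "j < i")
    case True
    show ?thesis
      using that[OF profile_interaction_has_integral[OF True]] pair_weight_neg_iff[of U i j]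
        pair_width_pos[of j i] by (simp add: zero_less_mult_iff mult_less_0_iff)
  next
    case False
    then have "i < j"
      using assms(2) by linarith
    moreover have "(j, i) \<in> U \<longleftrightarrow> (i, j) \<notin> U"
      using assms unfolding tournament_def by blast
    ultimately show ?thesis
      using that[OF profile_interaction_antisym[OF profile_interaction_has_integral]]
        pair_weight_pos_iff[of U j i] pair_width_pos[of i j]
      by (simp add: zero_less_mult_iff mult_less_0_iff)
  qed
  have "((\<lambda>x. x * bump_density U i x + profile U tent j x + profile U tent j x * profile U tent_slope i x)
      has_integral (1/2 + 0 + Q)) {0..1}"
    by (intro has_integral_add bump_density_first_moment profile_tent_has_integral Q)
  then show ?thesis
    using that sign by (simp add: bump_density_def bump_cdf_def algebra_simps)
qed

definition bump_law :: "(nat \<times> nat) set \<Rightarrow> nat \<Rightarrow> real measure" where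
  "bump_law U i = density_on_unit (bump_density U i)"

lemma prob_space_bump_law: "prob_space (bump_law U i)"
  unfolding bump_law_def
  using bump_density_has_integral[of 0 1 U i] bump_density_nonneg
  by (intro prob_space_density_on_unit) (auto simp: bump_cdf_0 bump_cdf_1)

lemma sets_bump_law [measurable_cong, simp]: "sets (bump_law U i) = sets borel"
  by (simp add: bump_law_def)

lemma measure_bump_law_atMost:
  "0 \<le> x \<Longrightarrow> x \<le> 1 \<Longrightarrow> measure (bump_law U i) {..x} = bump_cdf U i x"
  using emeasure_density_on_unit_atMost[OF _ bump_density_nonneg _ _ bump_density_has_integral[of 0 x]]
  by (simp add: bump_law_def measure_def bump_cdf_0 bump_cdf_nonneg)

lemma measure_bump_law_lessThan:
  "0 \<le> x \<Longrightarrow> x \<le> 1 \<Longrightarrow> measure (bump_law U i) {..<x} = bump_cdf U i x"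
  using emeasure_density_on_unit_lessThan[OF _ bump_density_nonneg _ _ bump_density_has_integral[of 0 x]]
  by (simp add: bump_law_def measure_def bump_cdf_0 bump_cdf_nonneg)

lemma mean_bump_law: "integral\<^sup>L (bump_law U i) (\<lambda>x. x) = 1/2"
  unfolding bump_law_def
  by (intro mean_density_on_unit bump_density_nonneg bump_density_first_moment) simp

lemma bump_law_win_iff:
  assumes "tournament UNIV U" "i \<noteq> j"
  shows "1/2 < measure (bump_law U i \<Otimes>\<^sub>M bump_law U j) {p. snd p < fst p} \<longleftrightarrow> (i, j) \<in> U"
proof -
  obtain Q where Q: "((\<lambda>x. bump_density U i x * bump_cdf U j x) has_integral (1/2 + Q)) {0..1}"
    and sign: "0 < Q \<longleftrightarrow> (i, j) \<in> U"
    using bump_win_has_integral[OF assms] .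
  have "((\<lambda>x. bump_density U i x * measure (bump_law U j) {..<x}) has_integral (1/2 + Q)) {0..1}"
    using Q by (rule has_integral_eq[rotated]) (simp add: measure_bump_law_lessThan)
  then have "emeasure (bump_law U i \<Otimes>\<^sub>M bump_law U j) {p. snd p < fst p} = ennreal (1/2 + Q)"
    unfolding bump_law_def[of U i]
    by (intro emeasure_density_on_unit_pair_less bump_density_nonneg prob_space_bump_law) auto
  moreover have "0 \<le> 1/2 + Q"
    using has_integral_nonneg[OF Q] bump_density_nonneg bump_cdf_nonneg by simp
  ultimately show ?thesis
    using sign by (simp add: measure_def)
qed

theorem theorem5p13:
  fixes U :: "(nat \<times> nat) set"
  assumes "universal_tournament (UNIV :: nat set) U"
  shows "\<exists>(M :: (nat \<Rightarrow> real) measure) (X :: nat \<Rightarrow> (nat \<Rightarrow> real) \<Rightarrow> real).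
           prob_space M \<and>
           prob_space.indep_vars M (\<lambda>_. borel) X UNIV \<and>
           (\<forall>i. continuous_rv_01 M (X i)) \<and>
           (\<forall>i. integral\<^sup>L M (X i) = 1/2) \<and>
           (\<forall>i j. measure M {\<omega> \<in> space M. X i \<omega> > X j \<omega>} > 1/2 \<longleftrightarrow> (i, j) \<in> U)"
proof -
  have tournament: "tournament UNIV U"
    using assms unfolding universal_tournament_def by blast
  define M where "M = PiM UNIV (bump_law U)"
  define X :: "nat \<Rightarrow> (nat \<Rightarrow> real) \<Rightarrow> real" where "X = (\<lambda>i \<omega>. \<omega> i)"
  interpret prob_space M
    unfolding M_def by (intro prob_space_PiM prob_space_bump_law)
  have law: "distr M borel (X i) = bump_law U i" for i
    unfolding M_def X_def by (intro distr_PiM_component_borel prob_space_bump_law) auto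
  have indep: "indep_vars (\<lambda>_. borel) X UNIV"
    unfolding M_def X_def by (intro indep_vars_PiM_components prob_space_bump_law) auto
  then have rv: "random_variable borel (X i)" for i
    by (auto simp: indep_vars_def)
  have "continuous_rv_01 M (X i)" for i
    using rv continuous_on_bump_cdf bump_cdf_strict_mono bump_cdf_0 bump_cdf_1
    by (intro continuous_rv_01I[where F="bump_cdf U i"]) (auto simp: law measure_bump_law_atMost)
  moreover have "integral\<^sup>L M (X i) = 1/2" for i
    using integral_distr[OF rv, of "\<lambda>x. x"] law mean_bump_law by simp
  moreover have "measure M {\<omega> \<in> space M. X i \<omega> > X j \<omega>} > 1/2 \<longleftrightarrow> (i, j) \<in> U" for i j
  proof (cases "i = j")
    case True
    then show ?thesis
      using tournament by (simp add: tournament_def)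
  next
    case False
    then have "indep_var borel (X i) borel (X j)"
      using indep_vars_imp_indep_var[OF indep] by simp
    then show ?thesis
      using bump_law_win_iff[OF tournament False] by (simp add: measure_less_indep_var law)
  qed
  ultimately show ?thesis
    using indep prob_space_axioms by blast
qed

end
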